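(* Let $\alpha,\beta>-1$, $n\ge1$, and let $d_{k,n}$, $0\le k\le n$, be as defined below. Then for every integer $k\ge0$ with $k+2\le n$, $$d_{k,n}=\frac{2(\alpha-\beta)(k+1)}{n(n+\alpha+\beta+1)-k^2-(\alpha+\beta+1)k}\,d_{k+1,n}+\frac{n(n+\alpha+\beta+1)-(k+2)^2+(\alpha+\beta+1)(k+2)}{n(n+\alpha+\beta+1)-k^2-(\alpha+\beta+1)k}\,d_{k+2,n},$$ and $$d_{n,n}=\frac{\Gamma(2n+\alpha+\beta+1)}{2^{2n}\Gamma(n+\alpha+\beta+1)\Gamma(n+1)},\qquad d_{n-1,n}=\frac{(\alpha-\beta)\Gamma(2n+\alpha+\beta)}{2^{2n-1}\Gamma(n+\alpha+\beta+1)\Gamma(n)}.$$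
   Context: For $\alpha,\beta>-1$ and $0\le k\le n$, $d_{k,n}=\frac{(n+\alpha+\beta+1)_k(k+\alpha+1)_{n-k}}{(n-k)!\,2^{2k}\Gamma(k+1)}\,{}_3F_2\!\left[\begin{matrix}k-n,\ n+k+\alpha+\beta+1,\ k+\frac12\\ k+\alpha+1,\ 2k+1\end{matrix};1\right]$, with $(a)_k$ the Pochhammer symbol and ${}_3F_2$ the generalized hypergeometric series. Equivalently, these are the coefficients in the Chebyshev expansion $P_n^{(\alpha,\beta)}(x)=d_{0,n}+2\sum_{k=1}^n d_{k,n}T_k(x)$, where $P_n^{(\alpha,\beta)}$ is the Jacobi polynomial and $T_k(\cos\theta)=\cos k\theta$. *)

theory Defs
  imports "HOL-Analysis.Analysis"
begin

text \<open>Generalized hypergeometric series 3F2 as a formal series (sum of the power series);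
  for a nonpositive integer upper parameter it terminates.\<close>
definition hyp3F2 :: "real \<Rightarrow> real \<Rightarrow> real \<Rightarrow> real \<Rightarrow> real \<Rightarrow> real \<Rightarrow> real" where
  "hyp3F2 a1 a2 a3 b1 b2 z =
     (\<Sum>j. pochhammer a1 j * pochhammer a2 j * pochhammer a3 j
            / (pochhammer b1 j * pochhammer b2 j) * z ^ j / fact j)"

text \<open>The Chebyshev coefficients d_{k,n} of the Jacobi polynomial.\<close>
definition dcoef :: "real \<Rightarrow> real \<Rightarrow> nat \<Rightarrow> nat \<Rightarrow> real" where
  "dcoef \<alpha> \<beta> k n =
     pochhammer (real n + \<alpha> + \<beta> + 1) k * pochhammer (real k + \<alpha> + 1) (n - k)
     / (fact (n - k) * 2 ^ (2 * k) * Gamma (real k + 1))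
     * hyp3F2 (real k - real n) (real n + real k + \<alpha> + \<beta> + 1) (real k + 1 / 2)
              (real k + \<alpha> + 1) (2 * real k + 1) 1"

end

theory Submission
  imports Defs
begin

text \<open>Expanding the terminating \<open>3F2\<close> and reindexing by \<open>i = k + j\<close> gives
  \<open>d(k,n) = \<Sum>i=k..n. (-1)^(i-k) A(i) / ((i+k)! (i-k)!)\<close>, where the weight
  \<open>A(i) = (n+\<alpha>+\<beta>+1)\<^sub>i (i+\<alpha>+1)\<^sub>n\<^sub>-\<^sub>i (1/2)\<^sub>i / (n-i)!\<close> (\<open>jacobi_cheb_weight\<close>)
  does not depend on \<open>k\<close>: the duplication formula \<open>(2k)! = 4^k (1/2)\<^sub>k k!\<close> absorbs the
  \<open>4^k\<close> and the lower parameters. Clear the denominator \<open>D\<close> of the recurrence and put the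
  \<open>i\<close>-th terms of \<open>D d(k,n) - 2(\<alpha>-\<beta>)(k+1) d(k+1,n) - E d(k+2,n)\<close> over the common
  denominator \<open>(i+k+2)! (i-k)!\<close>: the result is a quadratic polynomial in \<open>i\<close> times \<open>A(i)\<close>,
  which via the ratio \<open>A(i+1)/A(i)\<close> equals \<open>4(k+1)(H(i) - H(i+1))\<close> for an explicit \<open>H\<close>
  vanishing at \<open>i = k\<close> and \<open>i = n+1\<close>, so the sum telescopes to zero. The two top
  coefficients are sums of one and two terms, evaluated with \<open>(x)\<^sub>m = \<Gamma>(x+m) / \<Gamma>(x)\<close>.\<close>

lemma fact_add_eq_fact_mult_pochhammer:
  "(fact (m + j) :: 'a::{semiring_char_0,comm_semiring_1}) = fact m * pochhammer (of_nat m + 1) j"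
proof -
  have "(fact (m + j) :: 'a) = pochhammer 1 (m + j)" by (rule pochhammer_fact)
  also have "\<dots> = pochhammer 1 m * pochhammer (1 + of_nat m) j" by (rule pochhammer_product')
  finally show ?thesis by (simp add: pochhammer_fact add.commute)
qed

lemma pochhammer_neg_of_nat_mult_fact:
  assumes "j \<le> m"
  shows "pochhammer (- of_nat m) j * fact (m - j) = ((-1)^j * fact m :: 'a::field_char_0)"
proof -
  obtain r where m: "m = r + j" using assms by (metis le_add_diff_inverse2)
  have "pochhammer (- of_nat m) j = ((-1)^j * pochhammer (of_nat r + 1) j :: 'a)"
    unfolding pochhammer_minus m by simp
  then show ?thesis unfolding m using fact_add_eq_fact_mult_pochhammer[of r j, where 'a='a]
    by (simp add: mult_ac)
qed

lemma divide_eq_divide_mult_mult: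
  fixes x y c :: "'a::field"
  assumes "c \<noteq> 0"
  shows "x / y = x / (y * c) * c"
  using assms by simp

lemma hyp3F2_terminating:
  assumes "k \<le> n"
  shows "hyp3F2 (real k - real n) a2 a3 b1 b2 z =
    (\<Sum>j\<le>n-k. pochhammer (real k - real n) j * pochhammer a2 j * pochhammer a3 j
            / (pochhammer b1 j * pochhammer b2 j) * z ^ j / fact j)"
proof -
  have e: "real k - real n = - real (n - k)" using assms by (simp add: of_nat_diff)
  show ?thesis unfolding hyp3F2_def
    by (subst suminf_finite[where N="{..n-k}"]) (auto simp: e pochhammer_of_nat_eq_0_iff)
qed

definition jacobi_cheb_weight :: "real \<Rightarrow> real \<Rightarrow> nat \<Rightarrow> nat \<Rightarrow> real" where
  "jacobi_cheb_weight a b n i =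
     pochhammer (real n + a + b + 1) i * pochhammer (real i + a + 1) (n - i)
       * pochhammer (1/2) i / fact (n - i)"

lemma dcoef_summand_eq:
  assumes "a > -1" and "k \<le> n" and "j \<le> n - k"
  shows "pochhammer (real n + a + b + 1) k * pochhammer (real k + a + 1) (n - k)
     / (fact (n - k) * 2 ^ (2 * k) * Gamma (real k + 1)) *
     (pochhammer (real k - real n) j * pochhammer (real n + real k + a + b + 1) j
        * pochhammer (real k + 1 / 2) j
        / (pochhammer (real k + a + 1) j * pochhammer (2 * real k + 1) j) * 1 ^ j / fact j)
   = (-1)^j * jacobi_cheb_weight a b n (k+j) / (fact (2*k+j) * fact j)"
proof -
  define m where "m = n - k"
  define x where "x = real n + a + b + 1"
  have jm: "j \<le> m" and n: "n - (k + j) = m - j" using assms(3) by (auto simp: m_def)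
  have "pochhammer (real k + a + 1) m
      = pochhammer (real k + a + 1) j * pochhammer (real (k+j) + a + 1) (m - j)"
    using pochhammer_product'[of "real k + a + 1" j "m - j"] jm by (simp add: add_ac)
  moreover have "pochhammer x (k+j) = pochhammer x k * pochhammer (real n + real k + a + b + 1) j"
    unfolding x_def pochhammer_product' by (simp add: add_ac)
  moreover have "pochhammer (1/2::real) (k+j) = pochhammer (1/2) k * pochhammer (real k + 1/2) j"
    unfolding pochhammer_product' by (simp add: add_ac)
  moreover have "(fact (2*k+j) :: real)
      = 2^(2*k) * pochhammer (1/2) k * fact k * pochhammer (2 * real k + 1) j"
    using fact_add_eq_fact_mult_pochhammer[of "2*k" j, where 'a=real] by (simp add: fact_double)
  moreover have "pochhammer (real k - real n) j = (-1)^j * fact m / fact (m - j)"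
  proof -
    have "real k - real n = - real m" using assms(2) by (simp add: m_def of_nat_diff)
    then show ?thesis
      using pochhammer_neg_of_nat_mult_fact[OF jm, where 'a=real] by (simp add: eq_divide_eq)
  qed
  moreover have "Gamma (real k + 1) = fact k" using Gamma_fact[of k] by (simp add: add.commute)
  moreover have "pochhammer (real k + a + 1) j \<noteq> 0" "pochhammer (1/2::real) k \<noteq> 0"
    "pochhammer (2 * real k + 1) j \<noteq> 0"
    using assms(1) by (simp_all add: pochhammer_eq_0_iff)
  ultimately show ?thesis
    unfolding jacobi_cheb_weight_def x_def[symmetric] m_def[symmetric] n
    by (simp add: field_simps)
qed

lemma dcoef_eq_sum:
  assumes "a > -1" and "k \<le> n"
  shows "dcoef a b k n =
    (\<Sum>i=k..n. (-1)^(i-k) * jacobi_cheb_weight a b n i / (fact (i+k) * fact (i-k)))"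
proof -
  have "dcoef a b k n
      = (\<Sum>j\<le>n-k. (-1)^j * jacobi_cheb_weight a b n (k+j) / (fact (2*k+j) * fact j))"
    unfolding dcoef_def hyp3F2_terminating[OF assms(2)] sum_distrib_left
    by (rule sum.cong[OF refl], rule dcoef_summand_eq[OF assms]) simp
  also have "\<dots> = (\<Sum>i=k..n. (-1)^(i-k) * jacobi_cheb_weight a b n i / (fact (i+k) * fact (i-k)))"
    using assms(2) by (intro sum.reindex_bij_witness[of _ "\<lambda>i. i - k" "\<lambda>j. k + j"])
      (auto simp: mult_2 add_ac)
  finally show ?thesis .
qed

lemma jacobi_cheb_weight_Suc:
  assumes "i < n"
  shows "jacobi_cheb_weight a b n (Suc i) * (real i + a + 1) =
    jacobi_cheb_weight a b n i
      * ((real n + a + b + 1 + real i) * (real i + 1/2) * (real n - real i))"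
proof -
  define t where "t = n - Suc i"
  define T where "T = real t + 1"
  define P where "P = pochhammer (real i + a + 2) t"
  have t: "n - i = Suc t" "real n - real i = T"
    using assms by (simp_all add: t_def T_def of_nat_diff)
  have WS: "jacobi_cheb_weight a b n (Suc i)
      = pochhammer (real n + a + b + 1) i * (real n + a + b + 1 + real i)
        * P * (pochhammer (1/2) i * (1/2 + real i)) / fact t"
    unfolding jacobi_cheb_weight_def P_def t_def[symmetric] pochhammer_Suc by (simp add: add_ac)
  have W: "jacobi_cheb_weight a b n i
      = pochhammer (real n + a + b + 1) i * ((real i + a + 1) * P)
        * pochhammer (1/2) i / (T * fact t)"
    unfolding jacobi_cheb_weight_def P_def t pochhammer_rec T_def by (simp add: add_ac)
  have "T \<noteq> 0" by (simp add: T_def)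
  then show ?thesis unfolding WS W t by (simp add: field_simps)
qed

lemma alt_fact_quotient_common_denom:
  "(-1)^(i-k) * A / (fact (i+k) * fact (i-k)) =
   (-1)^(i-k) * A / (fact (i+k+2) * fact (i-k)) * ((real i + real k + 1) * (real i + real k + 2))"
proof -
  have D: "(fact (i+k+2) :: real) * fact (i-k)
      = fact (i+k) * fact (i-k) * ((real i + real k + 1) * (real i + real k + 2))"
    by (simp add: numeral_2_eq_2 algebra_simps)
  have "(real i + real k + 1) * (real i + real k + 2) \<noteq> 0"
    by (simp add: add_pos_pos del: of_nat_add)
  then show ?thesis unfolding D by (rule divide_eq_divide_mult_mult)
qed

lemma alt_fact_quotient_Suc_common_denom:
  assumes "k < i"
  shows "(-1)^(i-(k+1)) * A / (fact (i+(k+1)) * fact (i-(k+1))) =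
   (-1)^(i-k) * A / (fact (i+k+2) * fact (i-k)) * (-(real i + real k + 2) * (real i - real k))"
proof -
  define t where "t = i - (k+1)"
  have t: "i - k = Suc t" "real i - real k = real t + 1"
    using assms by (simp_all add: t_def of_nat_diff)
  have D: "(fact (i+k+2) :: real) * fact (i-k)
      = fact (i+(k+1)) * fact t * ((real i + real k + 2) * (real i - real k))"
    unfolding t by (simp add: numeral_2_eq_2 algebra_simps)
  have C: "(real i + real k + 2) * (real i - real k) \<noteq> 0" using assms by simp
  have s: "(-1::real)^(i-k) = - ((-1)^t)" unfolding t by simp
  have "(-1)^t * A / (fact (i+(k+1)) * fact t)
      = (-1)^t * A / (fact (i+(k+1)) * fact t * ((real i + real k + 2) * (real i - real k)))
        * ((real i + real k + 2) * (real i - real k))"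
    using C by (rule divide_eq_divide_mult_mult)
  then show ?thesis unfolding t_def[symmetric] D s
    by (simp only: mult_minus_left divide_minus_left minus_mult_minus)
qed

lemma alt_fact_quotient_Suc_Suc_common_denom:
  assumes "k + 1 < i"
  shows "(-1)^(i-(k+2)) * A / (fact (i+(k+2)) * fact (i-(k+2))) =
   (-1)^(i-k) * A / (fact (i+k+2) * fact (i-k)) * ((real i - real k) * (real i - real k - 1))"
proof -
  define t where "t = i - (k+2)"
  have t: "i - k = Suc (Suc t)" "real i - real k = real t + 2"
    using assms by (simp_all add: t_def of_nat_diff)
  have D: "(fact (i+k+2) :: real) * fact (i-k)
      = fact (i+(k+2)) * fact t * ((real i - real k) * (real i - real k - 1))"
    unfolding t by (simp add: algebra_simps)
  have C: "(real i - real k) * (real i - real k - 1) \<noteq> 0" using assms by simp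
  have s: "(-1::real)^(i-k) = (-1)^t" unfolding t by simp
  show ?thesis unfolding t_def[symmetric] D s using C by (rule divide_eq_divide_mult_mult)
qed

definition cheb_common_term :: "real \<Rightarrow> real \<Rightarrow> nat \<Rightarrow> nat \<Rightarrow> nat \<Rightarrow> real" where
  "cheb_common_term a b n k i =
     (-1)^(i-k) * jacobi_cheb_weight a b n i / (fact (i+k+2) * fact (i-k))"

lemma dcoef_eq_common_term_sum:
  assumes "a > -1" and "k \<le> n"
  shows "dcoef a b k n =
    (\<Sum>i=k..n. cheb_common_term a b n k i * ((real i + real k + 1) * (real i + real k + 2)))"
  unfolding dcoef_eq_sum[OF assms] cheb_common_term_def
  by (rule sum.cong[OF refl], rule alt_fact_quotient_common_denom)

lemma dcoef_Suc_eq_common_term_sum: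
  assumes "a > -1" and "k + 1 \<le> n"
  shows "dcoef a b (k+1) n =
    (\<Sum>i=k..n. cheb_common_term a b n k i * (-(real i + real k + 2) * (real i - real k)))"
proof -
  have "dcoef a b (k+1) n =
      (\<Sum>i=k+1..n. cheb_common_term a b n k i * (-(real i + real k + 2) * (real i - real k)))"
    unfolding dcoef_eq_sum[OF assms] cheb_common_term_def
    by (rule sum.cong[OF refl], rule alt_fact_quotient_Suc_common_denom) simp
  then show ?thesis using assms(2) by (simp add: sum.atLeast_Suc_atMost)
qed

lemma dcoef_Suc_Suc_eq_common_term_sum:
  assumes "a > -1" and "k + 2 \<le> n"
  shows "dcoef a b (k+2) n =
    (\<Sum>i=k..n. cheb_common_term a b n k i * ((real i - real k) * (real i - real k - 1)))"
proof -
  have "dcoef a b (k+2) n =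
      (\<Sum>i=k+2..n. cheb_common_term a b n k i * ((real i - real k) * (real i - real k - 1)))"
    unfolding dcoef_eq_sum[OF assms] cheb_common_term_def
    by (rule sum.cong[OF refl], rule alt_fact_quotient_Suc_Suc_common_denom) simp
  moreover have "k \<le> n" "Suc k \<le> n" using assms(2) by auto
  ultimately show ?thesis by (simp add: sum.atLeast_Suc_atMost)
qed

text \<open>The cut-off makes \<open>H(n+1) = 0\<close>; the closed formula itself does not vanish there.\<close>

definition cheb_telescoper :: "real \<Rightarrow> real \<Rightarrow> nat \<Rightarrow> nat \<Rightarrow> nat \<Rightarrow> real" where
  "cheb_telescoper a b n k i = (if i \<le> n then (real i + a) * (real i - real k)
     * ((-1)^(i-k) * jacobi_cheb_weight a b n i / (fact (i+k+1) * fact (i-k))) else 0)"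

lemma cheb_telescoper_eq:
  assumes "i \<le> n"
  shows "cheb_telescoper a b n k i =
    cheb_common_term a b n k i * ((real i + a) * (real i + real k + 2) * (real i - real k))"
proof -
  have D: "(fact (i+k+2) :: real) * fact (i-k) = fact (i+k+1) * fact (i-k) * (real i + real k + 2)"
    by (simp add: numeral_2_eq_2 algebra_simps)
  have "real i + real k + 2 \<noteq> 0" by linarith
  then have "(-1)^(i-k) * jacobi_cheb_weight a b n i / (fact (i+k+1) * fact (i-k))
    = (-1)^(i-k) * jacobi_cheb_weight a b n i / (fact (i+k+1) * fact (i-k) * (real i + real k + 2))
      * (real i + real k + 2)"
    by (rule divide_eq_divide_mult_mult)
  then show ?thesis unfolding cheb_telescoper_def cheb_common_term_def D using assms
    by (simp add: mult_ac)
qed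

lemma cheb_telescoper_Suc:
  assumes "a > -1" and "k \<le> i" and "i \<le> n"
  shows "cheb_telescoper a b n k (Suc i) =
    - cheb_common_term a b n k i
      * ((real n + a + b + 1 + real i) * (real i + 1/2) * (real n - real i))"
proof (cases "i = n")
  case True
  then show ?thesis by (simp add: cheb_telescoper_def)
next
  case False
  define X where "X = (real n + a + b + 1 + real i) * (real i + 1/2) * (real n - real i)"
  define T where "T = real (i - k) + 1"
  define A where "A = jacobi_cheb_weight a b n i"
  define s where "s = (-1::real)^(i-k)"
  define F where "F = (fact (i+k+2) :: real)"
  define G where "G = (fact (i-k) :: real)"
  define c where "c = real i + a + 1"
  have c: "c \<noteq> 0" using assms(1) by (simp add: c_def)
  have A': "jacobi_cheb_weight a b n (Suc i) = A * X / c"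
    using jacobi_cheb_weight_Suc[of i n a b] False assms(3) c unfolding A_def X_def c_def[symmetric]
    by (simp add: field_simps)
  have le: "Suc i \<le> n" using False assms(3) by simp
  have eqs: "(-1::real)^(Suc i - k) = - s" "(fact (Suc i - k) :: real) = T * G"
    "real (Suc i) - real k = T" "real (Suc i) + a = c" "(fact (Suc i + k + 1) :: real) = F"
    using assms(2) by (simp_all add: s_def T_def G_def F_def c_def Suc_diff_le of_nat_diff)
  have "T \<noteq> 0" "F \<noteq> 0" "G \<noteq> 0" by (simp_all add: T_def F_def G_def)
  with c show ?thesis
    unfolding cheb_telescoper_def cheb_common_term_def if_P[OF le] A' eqs X_def[symmetric]
      A_def[symmetric] s_def[symmetric] F_def[symmetric] G_def[symmetric]
    by (simp add: field_simps)
qed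

lemma dcoef_recurrence_polynomial_identity:
  fixes a b n k i :: real
  shows "(n * (n + a + b + 1) - k^2 - (a + b + 1) * k) * ((i + k + 1) * (i + k + 2))
     + 2*(a-b)*(k+1) * ((i + k + 2) * (i - k))
     - (n * (n + a + b + 1) - (k + 2)^2 + (a + b + 1) * (k + 2)) * ((i - k) * (i - k - 1))
   = 4*(k+1) * ((n + a + b + 1 + i) * (i + 1/2) * (n - i) + (i + a) * (i + k + 2) * (i - k))"
  by (simp add: field_simps power2_eq_square)

lemma cheb_common_term_recurrence_telescopes:
  assumes "a > -1" and "k \<le> i" and "i \<le> n"
  shows "cheb_common_term a b n k i *
      ((real n * (real n + a + b + 1) - (real k)^2 - (a + b + 1) * real k)
          * ((real i + real k + 1) * (real i + real k + 2))
        + 2*(a-b)*(real k+1) * ((real i + real k + 2) * (real i - real k))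
        - (real n * (real n + a + b + 1) - (real k + 2)^2 + (a + b + 1) * (real k + 2))
          * ((real i - real k) * (real i - real k - 1)))
    = 4*(real k+1) * (cheb_telescoper a b n k i - cheb_telescoper a b n k (Suc i))"
  unfolding dcoef_recurrence_polynomial_identity cheb_telescoper_eq[OF assms(3)]
    cheb_telescoper_Suc[OF assms]
  by (simp add: field_simps)

lemma dcoef_recurrence_cleared:
  assumes "a > -1" and "k + 2 \<le> n"
  shows "(real n * (real n + a + b + 1) - (real k)^2 - (a + b + 1) * real k) * dcoef a b k n =
     2*(a-b)*(real k+1) * dcoef a b (k+1) n
     + (real n * (real n + a + b + 1) - (real k + 2)^2 + (a + b + 1) * (real k + 2))
       * dcoef a b (k+2) n"
proof -
  define D where "D = real n * (real n + a + b + 1) - (real k)^2 - (a + b + 1) * real k"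
  define E where "E = real n * (real n + a + b + 1) - (real k + 2)^2 + (a + b + 1) * (real k + 2)"
  define H where "H = cheb_telescoper a b n k"
  have kn: "k \<le> n" "k + 1 \<le> n" using assms(2) by auto
  have "D * dcoef a b k n - 2*(a-b)*(real k+1) * dcoef a b (k+1) n - E * dcoef a b (k+2) n
      = (\<Sum>i=k..n. cheb_common_term a b n k i *
          (D * ((real i + real k + 1) * (real i + real k + 2))
            + 2*(a-b)*(real k+1) * ((real i + real k + 2) * (real i - real k))
            - E * ((real i - real k) * (real i - real k - 1))))"
    unfolding dcoef_eq_common_term_sum[OF assms(1) kn(1)]
      dcoef_Suc_eq_common_term_sum[OF assms(1) kn(2)] dcoef_Suc_Suc_eq_common_term_sum[OF assms]
      sum_distrib_left sum_subtractf[symmetric]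
    by (rule sum.cong) (simp_all add: algebra_simps)
  also have "\<dots> = (\<Sum>i=k..n. 4*(real k+1) * (H i - H (Suc i)))"
    unfolding D_def E_def H_def
    by (rule sum.cong[OF refl], rule cheb_common_term_recurrence_telescopes[OF assms(1)]) auto
  also have "\<dots> = 4*(real k+1) * (H k - H (Suc n))"
    using sum_Suc_diff[of k n "\<lambda>i. - H i"] kn(1) by (simp add: sum_distrib_left[symmetric])
  also have "\<dots> = 0" by (simp add: H_def cheb_telescoper_def)
  finally show ?thesis unfolding D_def E_def by simp
qed

lemma dcoef_diagonal:
  assumes "a > -1" and "b > -1" and "n \<ge> 1"
  shows "dcoef a b n n = Gamma (2 * real n + a + b + 1)
             / (2 ^ (2 * n) * Gamma (real n + a + b + 1) * Gamma (real n + 1))"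
proof -
  have "real n \<ge> 1" using assms(3) by simp
  with assms have "real n + a + b + 1 > 0" by linarith
  then have x: "real n + a + b + 1 \<notin> \<int>\<^sub>\<le>\<^sub>0" by (metis nonpos_Ints_nonpos not_le)
  have "dcoef a b n n = pochhammer (real n + a + b + 1) n / (2 ^ (2 * n) * fact n)"
    unfolding dcoef_eq_sum[OF assms(1) order_refl] jacobi_cheb_weight_def
    using pochhammer_pos[of "1/2::real" n] by (simp add: mult_2[symmetric] fact_double)
  also have "\<dots> = Gamma (2 * real n + a + b + 1)
             / (2 ^ (2 * n) * Gamma (real n + a + b + 1) * Gamma (real n + 1))"
    unfolding pochhammer_Gamma[OF x] Gamma_fact[of n, symmetric]
    by (simp add: add_ac)
  finally show ?thesis .
qed

lemma dcoef_subdiagonal: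
  assumes "a > -1" and "b > -1" and "n \<ge> 1"
  shows "dcoef a b (n - 1) n = (a - b) * Gamma (2 * real n + a + b)
             / (2 ^ (2 * n - 1) * Gamma (real n + a + b + 1) * Gamma (real n))"
proof -
  obtain m where n: "n = Suc m" using assms(3) by (cases n) auto
  define x where "x = real n + a + b + 1"
  define P where "P = pochhammer x m"
  define H where "H = pochhammer (1/2::real) m"
  define F where "F = (fact m :: real)"
  define c where "c = (2::real) ^ (2 * m)"
  define T where "T = 2 * real m + 1"
  have "x > 0" using assms by (simp add: x_def n)
  then have x: "x \<notin> \<int>\<^sub>\<le>\<^sub>0" by (metis nonpos_Ints_nonpos not_le)
  have nz: "H \<noteq> 0" "F \<noteq> 0" "c \<noteq> 0" "T \<noteq> 0"
    using pochhammer_pos[of "1/2::real" m] by (simp_all add: H_def F_def c_def T_def)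
  have "dcoef a b (n - 1) n = jacobi_cheb_weight a b n m / fact (2*m)
      - jacobi_cheb_weight a b n (Suc m) / fact (Suc (2*m))"
    unfolding dcoef_eq_sum[OF assms(1) diff_le_self] n by (simp add: mult_2 del: fact_Suc)
  also have "\<dots> = P * (real m + a + 1) * H / (c * H * F)
      - P * (x + real m) * (H * T / 2) / (T * (c * H * F))"
    unfolding jacobi_cheb_weight_def fact_Suc fact_double
    by (simp add: n P_def H_def F_def c_def x_def T_def pochhammer_Suc field_simps)
  also have "\<dots> = (a - b) * P / (2 * c * F)"
    using nz by (simp add: x_def n field_simps)
  also have "\<dots> = (a - b) * Gamma (2 * real n + a + b)
             / (2 ^ (2 * n - 1) * Gamma (real n + a + b + 1) * Gamma (real n))"
    unfolding P_def pochhammer_Gamma[OF x] F_def c_def n Gamma_fact[of m, symmetric]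
    by (simp add: x_def n add_ac)
  finally show ?thesis .
qed

lemma dcoef_recurrence:
  assumes "a > -1" and "b > -1" and "k + 2 \<le> n"
  shows "dcoef a b k n =
      2 * (a - b) * (real k + 1)
        / (real n * (real n + a + b + 1) - (real k)^2 - (a + b + 1) * real k)
        * dcoef a b (k + 1) n
    + (real n * (real n + a + b + 1) - (real k + 2)^2 + (a + b + 1) * (real k + 2))
        / (real n * (real n + a + b + 1) - (real k)^2 - (a + b + 1) * real k)
        * dcoef a b (k + 2) n"
proof -
  define D where "D = real n * (real n + a + b + 1) - (real k)^2 - (a + b + 1) * real k"
  define E where "E = real n * (real n + a + b + 1) - (real k + 2)^2 + (a + b + 1) * (real k + 2)"
  have "D = (real n - real k) * (real n + real k + a + b + 1)"
    by (simp add: D_def algebra_simps power2_eq_square)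
  moreover have "real n - real k > 0" "real n + real k + a + b + 1 > 0" using assms by auto
  ultimately have "D \<noteq> 0" by simp
  moreover have "D * dcoef a b k n
      = 2 * (a - b) * (real k + 1) * dcoef a b (k + 1) n + E * dcoef a b (k + 2) n"
    using dcoef_recurrence_cleared[OF assms(1,3)] by (simp add: D_def E_def)
  ultimately show ?thesis unfolding D_def[symmetric] E_def[symmetric] by (simp add: field_simps)
qed

theorem mainTheorem2:
  fixes \<alpha> \<beta> :: real and n :: nat
  assumes "\<alpha> > -1" and "\<beta> > -1" and "n \<ge> 1"
  shows "(\<forall>k::nat. k + 2 \<le> n \<longrightarrow>
            dcoef \<alpha> \<beta> k n =
              2 * (\<alpha> - \<beta>) * (real k + 1)
                / (real n * (real n + \<alpha> + \<beta> + 1) - (real k)^2 - (\<alpha> + \<beta> + 1) * real k)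
                * dcoef \<alpha> \<beta> (k + 1) n
            + (real n * (real n + \<alpha> + \<beta> + 1) - (real k + 2)^2 + (\<alpha> + \<beta> + 1) * (real k + 2))
                / (real n * (real n + \<alpha> + \<beta> + 1) - (real k)^2 - (\<alpha> + \<beta> + 1) * real k)
                * dcoef \<alpha> \<beta> (k + 2) n)
       \<and> dcoef \<alpha> \<beta> n n =
           Gamma (2 * real n + \<alpha> + \<beta> + 1)
             / (2 ^ (2 * n) * Gamma (real n + \<alpha> + \<beta> + 1) * Gamma (real n + 1))
       \<and> dcoef \<alpha> \<beta> (n - 1) n =
           (\<alpha> - \<beta>) * Gamma (2 * real n + \<alpha> + \<beta>)
             / (2 ^ (2 * n - 1) * Gamma (real n + \<alpha> + \<beta> + 1) * Gamma (real n))"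
  using dcoef_recurrence[OF assms(1,2)] dcoef_diagonal[OF assms] dcoef_subdiagonal[OF assms]
  by blast

end
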